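(* Every binary Belov code (as defined in the context) is not self-orthogonal.
   Context: Let $S_k$ be the $k\times(2^k-1)$ binary matrix whose columns are all nonzero vectors of $\mathbb{F}_2^k$, and for an integer $s\ge1$ let $sS_k$ be the $k\times s(2^k-1)$ matrix consisting of $s$ copies of $S_k$ placed side by side. For a subspace $V$ of $\mathbb{F}_2^k$ write $V^*=V\setminus\{0\}$. A binary Belov code is defined as follows. Let $s\ge 1$, $t\ge 0$ and integers $u_1>u_2>\cdots>u_t>u\ge 3$ with $k>u_1$ (and $k\ge u+1$ if $t=0$). Let $V_1,\dots,V_t$ be subspaces of $\mathbb{F}_2^k$ with $\dim V_i=u_i$, let $W$ be a subspace of dimension $u+1$, and let $T\subseteq W^*$ be a set of $u+2$ vectors which spans a space of dimension $u+1$ and whose sum is $0$. Let $R$ be either empty or a single nonzero vector of $\mathbb{F}_2^k$. Let $G'$ be the matrix whose columns are the vectors of $V_1^*,\dots,V_t^*$, of $W^*\setminus T$, and of $R$ (listed with multiplicity), and suppose that every nonzero vector of $\mathbb{F}_2^k$ occurs at most $s$ times among the columns of $G'$, so that $G'$ can be regarded as a submatrix of $sS_k$. Let $G$ be the matrix obtained from $sS_k$ by deleting the columns of $G'$ (with multiplicity), and assume $G$ has rank $k$. The binary code generated by $G$ is called a Belov code. A binary code is self-orthogonal if $C\subseteq C^\perp$. *)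

theory Defs
  imports "HOL-Analysis.Analysis" "HOL-Library.Z2" "HOL-Library.Multiset"
begin

text \<open>Vectors of F_2^k are elements of type bit ^ 'k (k = CARD('k)).
  A generator matrix with k rows is given as the list of its columns.\<close>

definition dotF2 :: "bit ^ 'k \<Rightarrow> bit ^ 'k \<Rightarrow> bit" where
  "dotF2 x v = (\<Sum>i\<in>UNIV. x $ i * v $ i)"

definition gen_code :: "(bit ^ 'k) list \<Rightarrow> bit list set" where
  "gen_code G = {map (\<lambda>v. dotF2 x v) G | x. True}"

definition dual_code :: "nat \<Rightarrow> bit list set \<Rightarrow> bit list set" where
  "dual_code n C = {w. length w = n \<and> (\<forall>c\<in>C. (\<Sum>i<n. w ! i * c ! i) = 0)}"

definition self_orthogonal :: "nat \<Rightarrow> bit list set \<Rightarrow> bool" where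
  "self_orthogonal n C \<longleftrightarrow> C \<subseteq> dual_code n C"

text \<open>Columns of s S_k, as a multiset: every nonzero vector s times.\<close>
definition sS :: "nat \<Rightarrow> (bit ^ 'k) multiset" where
  "sS s = repeat_mset s (mset_set (UNIV - {0}))"

end

theory Submission
  imports Defs
begin

text \<open>For words x, y of F_2^k the codewords xG and yG have inner product
  \<open>\<Sum>g (x\<cdot>g)(y\<cdot>g)\<close>, summed over the columns g of G. Over the nonzero vectors of a
  subspace of dimension at least 3 this sum vanishes: the subspace has more than four elements,
  so two of them agree under \<open>g \<mapsto> (x\<cdot>g, y\<cdot>g)\<close>, and translation by their difference
  pairs up the terms. Since G is the complement of G' in s S_k, in characteristic 2 the inner
  product is therefore that of the columns of G', which reduces to the contribution of T and R.
  If R = {r}, take x = y = e_i with r_i = 1: T contributes the i-th coordinate of \<open>\<Sum>T = 0\<close> and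
  R contributes 1. If R is empty, T without one vector t0 is independent, so x and y can be
  chosen dual to two distinct vectors of it; then only \<open>t0 = \<Sum>(T - {t0})\<close> contributes, and
  the inner product is 1.\<close>

declare mult_bit_eq_and[simp del] add_bit_eq_xor[simp del]

lemma UNIV_bit: "(UNIV :: bit set) = {0, 1}"
  by (auto intro: bit.exhaust)

instance bit :: finite
  by standard (simp add: UNIV_bit)

lemma bit_add_eq_0_iff: "(a::bit) + b = 0 \<longleftrightarrow> a = b"
  by (cases a; cases b) (simp_all add: add_bit_eq_xor)

lemma bit_mult_self [simp]: "(a::bit) * a = a"
  by (cases a) simp_all

lemma vec_bit_add_self [simp]: "(v::bit^'k) + v = 0"
  by (simp add: vec_eq_iff bit_add_eq_0_iff)

lemma vec_bit_add_eq_0_iff: "(a::bit^'k) + b = 0 \<longleftrightarrow> a = b"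
  by (simp add: vec_eq_iff bit_add_eq_0_iff)

lemma vec_bit_nonzero_component:
  assumes "(a::bit^'k) \<noteq> 0"
  obtains i where "a $ i = 1"
  using assms by (metis bit_not_zero_iff vec_eq_iff zero_index)

lemma dotF2_zero [simp]: "dotF2 x 0 = 0"
  unfolding dotF2_def by simp

lemma dotF2_add: "dotF2 x (a + b) = dotF2 x a + dotF2 x b"
  unfolding dotF2_def by (simp add: distrib_left sum.distrib)

lemma dotF2_sum: "dotF2 x (\<Sum>S) = (\<Sum>v\<in>S. dotF2 x v)"
  unfolding dotF2_def by (simp add: sum_component sum_distrib_left sum.swap[where A=S])

lemma dotF2_axis: "dotF2 (axis i 1) v = v $ i"
proof -
  have "axis i 1 $ j * v $ j = (if j = i then v $ j else 0)" for j
    by (simp add: axis_def)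
  then show ?thesis unfolding dotF2_def by simp
qed

lemma exists_dotF2_on_independent:
  fixes B :: "(bit^'k) set"
  assumes "vec.independent B"
  shows "\<exists>x. \<forall>b\<in>B. dotF2 x b = h b"
proof -
  \<comment> \<open>extend \<open>b \<mapsto> (h b, \<dots>, h b)\<close> linearly and read off an arbitrary coordinate j\<close>
  obtain f :: "bit^'k \<Rightarrow> bit^'k"
    where f: "Vector_Spaces.linear (*s) (*s) f" "\<forall>b\<in>B. f b = (\<chi> j. h b)"
    using vec.linear_independent_extend[OF assms, of "\<lambda>b. \<chi> j. h b"] by blast
  fix j :: 'k
  define x where "x = (\<chi> i. f (axis i 1) $ j)"
  have "dotF2 x v = f v $ j" for v
    unfolding dotF2_def x_def linear_componentwise[OF f(1), of v j] by (simp add: mult.commute)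
  then have "\<forall>b\<in>B. dotF2 x b = h b" using f(2) by simp
  then show ?thesis ..
qed

lemma sum_bit_eq_0_if_translation_invariant:
  fixes f :: "bit^'k \<Rightarrow> bit"
  assumes "a \<noteq> 0" and "\<forall>v\<in>V. v + a \<in> V \<and> f (v + a) = f v"
  shows "sum f V = 0"
proof -
  obtain i where i: "a $ i = 1" using assms(1) by (rule vec_bit_nonzero_component)
  define V0 where "V0 = {v\<in>V. v $ i = 0}"
  define V1 where "V1 = {v\<in>V. v $ i = 1}"
  have "V = V0 \<union> V1" "V0 \<inter> V1 = {}" unfolding V0_def V1_def by auto
  then have "sum f V = sum f V0 + sum f V1" by (simp add: sum.union_disjoint)
  moreover have "sum f V1 = sum f V0"
    by (rule sum.reindex_bij_witness[where i="\<lambda>v. v + a" and j="\<lambda>v. v + a"])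
      (use assms(2) i in \<open>auto simp: V0_def V1_def add.assoc\<close>)
  ultimately show ?thesis by simp
qed

lemma subspace_card_gt_4:
  fixes V :: "(bit^'k) set"
  assumes "vec.subspace V" and "vec.dim V \<ge> 3"
  shows "card V > 4"
proof -
  obtain B where B: "B \<subseteq> V" "vec.independent B" "card B = vec.dim V"
    using vec.basis_exists by metis
  obtain S where "S \<subseteq> B" "card S = 3"
    using assms(2) B(3) obtain_subset_with_card_n by metis
  then obtain b1 b2 b3 where bs: "b1 \<in> B" "b2 \<in> B" "b3 \<in> B" "b1 \<noteq> b2" "b2 \<noteq> b3" "b1 \<noteq> b3"
    by (auto simp: card_3_iff)
  have "b \<noteq> 0" if "b \<in> B" for b
    using that vec.dependent_zero B(2) by blast
  moreover have "b1 + b2 \<noteq> b3"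
  proof
    assume "b1 + b2 = b3"
    moreover have "b1 + b2 \<in> vec.span (B - {b3})"
      using bs by (intro vec.span_add vec.span_base) auto
    ultimately show False
      using B(2) bs(3) vec.dependent_def by blast
  qed
  ultimately have "card {0, b1, b2, b3, b1 + b2} = 5"
    using bs by (auto simp: vec_bit_add_eq_0_iff)
  moreover have "card {0, b1, b2, b3, b1 + b2} \<le> card V"
    using bs B(1)
    by (intro card_mono) (auto intro: vec.subspace_add[OF assms(1)] vec.subspace_0[OF assms(1)])
  ultimately show ?thesis by linarith
qed

lemma subspace_exists_common_dotF2_zero:
  fixes V :: "(bit^'k) set"
  assumes "vec.subspace V" and "card V > 4"
  obtains a where "a \<in> V" "a \<noteq> 0" "dotF2 x a = 0" "dotF2 y a = 0"
proof -
  let ?f = "\<lambda>v. (dotF2 x v, dotF2 y v)"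
  have "\<not> inj_on ?f V"
  proof
    assume "inj_on ?f V"
    then have "card V \<le> card (UNIV :: (bit \<times> bit) set)"
      by (rule card_inj_on_le) simp_all
    also have "\<dots> = 4" by (simp add: UNIV_Times_UNIV[symmetric] UNIV_bit del: UNIV_Times_UNIV)
    finally show False using assms(2) by simp
  qed
  then obtain v w where "v \<in> V" "w \<in> V" "v \<noteq> w" "?f v = ?f w"
    unfolding inj_on_def by blast
  then show thesis
    using that[of "v + w"] vec.subspace_add[OF assms(1)]
    by (auto simp: dotF2_add vec_bit_add_eq_0_iff)
qed

lemma sum_dotF2_product_subspace:
  fixes V :: "(bit^'k) set"
  assumes "vec.subspace V" and "vec.dim V \<ge> 3"
  shows "(\<Sum>v\<in>V. dotF2 x v * dotF2 y v) = 0"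
proof -
  obtain a where "a \<in> V" "a \<noteq> 0" "dotF2 x a = 0" "dotF2 y a = 0"
    using subspace_exists_common_dotF2_zero[OF assms(1) subspace_card_gt_4[OF assms]] .
  then show ?thesis
    by (intro sum_bit_eq_0_if_translation_invariant[of a])
      (auto simp: dotF2_add intro: vec.subspace_add[OF assms(1)])
qed

lemma sum_dotF2_product_subspace_nonzero:
  fixes V :: "(bit^'k) set"
  assumes "vec.subspace V" and "vec.dim V \<ge> 3"
  shows "(\<Sum>v\<in>V - {0}. dotF2 x v * dotF2 y v) = 0"
  using sum_dotF2_product_subspace[OF assms, of x y] vec.subspace_0[OF assms(1)]
  by (simp add: sum.remove)

lemma zero_sum_independent_Diff:
  fixes T :: "(bit^'k) set"
  assumes "finite T" "\<Sum>T = 0" "vec.dim T + 1 = card T" "t \<in> T"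
  shows "vec.independent (T - {t})"
proof -
  have "\<Sum>T = t + \<Sum>(T - {t})"
    using assms(1,4) by (simp add: sum.remove)
  then have "t = \<Sum>(T - {t})"
    using assms(2) by (simp add: vec_bit_add_eq_0_iff)
  then have "t \<in> vec.span (T - {t})"
    by (metis vec.span_base vec.span_sum)
  then have "vec.span T = vec.span (T - {t})"
    using assms(4) by (metis insert_Diff vec.span_redundant)
  then have "vec.dim (T - {t}) = card (T - {t})"
    using assms by (metis vec.dim_span card_Diff_singleton add_diff_cancel_right')
  then show ?thesis
    using vec.card_eq_dim[OF order_refl, of "T - {t}"] vec.span_superset[of "T - {t}"] assms(1)
    by simp
qed

lemma zero_sum_circuit_dotF2_product:
  fixes T :: "(bit^'k) set"
  assumes "finite T" "\<Sum>T = 0" "vec.dim T + 1 = card T" "card T \<ge> 3"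
  shows "\<exists>x y. (\<Sum>t\<in>T. dotF2 x t * dotF2 y t) = 1"
proof -
  obtain t0 where t0: "t0 \<in> T" using assms(4) by fastforce
  define T' where "T' = T - {t0}"
  have t0_sum: "t0 = \<Sum>T'"
    using assms(1,2) t0 unfolding T'_def by (simp add: sum.remove vec_bit_add_eq_0_iff)
  have "card T' \<ge> 2" using assms(1,4) t0 unfolding T'_def by simp
  then obtain t1 t2 where ts: "t1 \<in> T'" "t2 \<in> T'" "t1 \<noteq> t2"
    by (metis card_2_iff obtain_subset_with_card_n insert_subset)
  have ind: "vec.independent T'"
    using zero_sum_independent_Diff[OF assms(1-3) t0] unfolding T'_def .
  obtain x where x: "\<forall>t\<in>T'. dotF2 x t = (if t = t1 then 1 else 0)"
    using exists_dotF2_on_independent[OF ind, of "\<lambda>t. if t = t1 then 1 else 0"] by blast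
  obtain y where y: "\<forall>t\<in>T'. dotF2 y t = (if t = t2 then 1 else 0)"
    using exists_dotF2_on_independent[OF ind, of "\<lambda>t. if t = t2 then 1 else 0"] by blast
  have "dotF2 x t0 = 1" "dotF2 y t0 = 1"
    unfolding t0_sum dotF2_sum using x y ts assms(1) unfolding T'_def by simp_all
  moreover have "(\<Sum>t\<in>T'. dotF2 x t * dotF2 y t) = 0"
    using x y ts by (intro sum.neutral) auto
  ultimately have "(\<Sum>t\<in>T. dotF2 x t * dotF2 y t) = 1"
    using assms(1) t0 unfolding T'_def by (simp add: sum.remove)
  then show ?thesis by blast
qed

lemma sum_dotF2_product_subspace_Diff:
  fixes W T :: "(bit^'k) set"
  assumes "vec.subspace W" and "vec.dim W \<ge> 3" and "T \<subseteq> W - {0}"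
  shows "(\<Sum>v\<in>W - {0} - T. dotF2 x v * dotF2 y v) = (\<Sum>v\<in>T. dotF2 x v * dotF2 y v)"
  using sum.subset_diff[OF assms(3), of "\<lambda>v. dotF2 x v * dotF2 y v"]
    sum_dotF2_product_subspace_nonzero[OF assms(1,2), of x y]
  by (simp add: bit_add_eq_0_iff)

definition codeword_inner :: "bit^'k \<Rightarrow> bit^'k \<Rightarrow> (bit^'k) multiset \<Rightarrow> bit" where
  "codeword_inner x y M = (\<Sum>v\<in>#M. dotF2 x v * dotF2 y v)"

lemma codeword_inner_empty [simp]: "codeword_inner x y {#} = 0"
  by (simp add: codeword_inner_def)

lemma codeword_inner_singleton [simp]: "codeword_inner x y {#v#} = dotF2 x v * dotF2 y v"
  by (simp add: codeword_inner_def)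

lemma codeword_inner_union [simp]:
  "codeword_inner x y (M + N) = codeword_inner x y M + codeword_inner x y N"
  by (simp add: codeword_inner_def)

lemma codeword_inner_sum:
  "codeword_inner x y (\<Sum>i\<in>I. M i) = (\<Sum>i\<in>I. codeword_inner x y (M i))"
  by (induction I rule: infinite_finite_induct) (simp_all add: codeword_inner_def)

lemma codeword_inner_mset_set:
  "finite A \<Longrightarrow> codeword_inner x y (mset_set A) = (\<Sum>v\<in>A. dotF2 x v * dotF2 y v)"
  by (simp add: codeword_inner_def sum_unfold_sum_mset)

lemma codeword_inner_repeat_mset:
  "codeword_inner x y (repeat_mset n M) = of_nat n * codeword_inner x y M"
  by (induction n) (simp_all add: codeword_inner_def distrib_right)

lemma codeword_inner_sS:
  assumes "CARD('k) \<ge> 3"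
  shows "codeword_inner x y (sS s :: (bit^'k) multiset) = 0"
proof -
  have "vec.dim (UNIV :: (bit^'k) set) \<ge> 3"
    using assms by (simp add: vec.dim_UNIV card_cart_basis)
  then show ?thesis
    unfolding sS_def codeword_inner_repeat_mset
    by (simp add: codeword_inner_mset_set sum_dotF2_product_subspace_nonzero[OF vec.subspace_UNIV])
qed

lemma self_orthogonal_codeword_inner:
  assumes "self_orthogonal (length G) (gen_code G)"
  shows "codeword_inner x y (mset G) = 0"
proof -
  have "map (dotF2 x) G \<in> gen_code G" "map (dotF2 y) G \<in> gen_code G"
    unfolding gen_code_def by blast+
  then have "(\<Sum>i<length G. map (dotF2 x) G ! i * map (dotF2 y) G ! i) = 0"
    using assms unfolding self_orthogonal_def dual_code_def by blast
  moreover have "codeword_inner x y (mset G) = (\<Sum>i<length G. dotF2 x (G ! i) * dotF2 y (G ! i))"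
    unfolding codeword_inner_def
    by (simp flip: mset_map add: sum_mset_sum_list sum_list_sum_nth atLeast0LessThan)
  ultimately show ?thesis by simp
qed

lemma sS_diff_add:
  assumes "\<forall>v. v \<noteq> 0 \<longrightarrow> count M v \<le> s" and "0 \<notin># M"
  shows "sS s - M + M = sS s"
proof -
  have "count M v \<le> count (sS s) v" for v
    using assms by (cases "v = 0") (auto simp: sS_def count_eq_zero_iff)
  then have "M \<subseteq># sS s" by (simp add: subseteq_mset_def)
  then show ?thesis by simp
qed

lemma codeword_inner_complement:
  assumes "mset G + M = sS s" and "CARD('k) \<ge> 3"
  shows "codeword_inner x y (mset G) = codeword_inner x y (M :: (bit^'k) multiset)"
  using arg_cong[OF assms(1), of "codeword_inner x y"] codeword_inner_sS[OF assms(2)]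
  by (simp add: bit_add_eq_0_iff)

lemma circuit_point_codeword_inner_eq_1:
  fixes T R :: "(bit^'k) set"
  assumes "finite T" "\<Sum>T = 0" "vec.dim T + 1 = card T" "card T \<ge> 3"
    and "R = {} \<or> (\<exists>r. r \<noteq> 0 \<and> R = {r})"
  obtains x y where "(\<Sum>v\<in>T. dotF2 x v * dotF2 y v) + codeword_inner x y (mset_set R) = 1"
  using assms(5)
proof
  assume "R = {}"
  then show thesis
    using zero_sum_circuit_dotF2_product[OF assms(1-4)] that by auto
next
  assume "\<exists>r. r \<noteq> 0 \<and> R = {r}"
  then obtain r i where "R = {r}" "r $ i = 1"
    by (metis vec_bit_nonzero_component)
  then show thesis
    using that[of "axis i 1" "axis i 1"] assms(2)
    by (simp add: dotF2_axis flip: sum_component)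
qed

lemma decreasing_ge_last:
  fixes f :: "nat \<Rightarrow> nat"
  assumes "\<forall>i. Suc i < t \<longrightarrow> f (Suc i) < f i" and "i < t"
  shows "f (t - 1) \<le> f i"
proof -
  have "i \<le> t - 1" using assms(2) by simp
  then show ?thesis
  proof (induction rule: inc_induct)
    case (step n)
    then have "f (Suc n) < f n" using assms(1) by simp
    with step show ?case by simp
  qed simp
qed

theorem theorem4p2:
  fixes G :: "(bit ^ 'k) list"
    and s t u :: nat and us :: "nat \<Rightarrow> nat"
    and V :: "nat \<Rightarrow> (bit ^ 'k) set" and W T R :: "(bit ^ 'k) set"
  assumes s_pos: "s \<ge> 1"
    and us_decr: "\<forall>i. Suc i < t \<longrightarrow> us (Suc i) < us i"
    and us_last: "t > 0 \<longrightarrow> us (t - 1) > u"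
    and u_ge: "u \<ge> 3"
    and k_gt: "t > 0 \<longrightarrow> CARD('k) > us 0"
    and k_ge: "t = 0 \<longrightarrow> CARD('k) \<ge> u + 1"
    and V_sub: "\<forall>i<t. vec.subspace (V i) \<and> vec.dim (V i) = us i"
    and W_sub: "vec.subspace W" and W_dim: "vec.dim W = u + 1"
    and T_sub: "T \<subseteq> W - {0}" and T_card: "card T = u + 2"
    and T_dim: "vec.dim T = u + 1" and T_sum: "\<Sum>T = 0"
    and R_def: "R = {} \<or> (\<exists>r. r \<noteq> 0 \<and> R = {r})"
    and G'_le: "\<forall>v. v \<noteq> 0 \<longrightarrow>
        count ((\<Sum>i<t. mset_set (V i - {0})) + mset_set (W - {0} - T) + mset_set R) v \<le> s"
    and G_def: "mset G = sS s -
        ((\<Sum>i<t. mset_set (V i - {0})) + mset_set (W - {0} - T) + mset_set R)"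
    and G_rank: "vec.dim (set G) = CARD('k)"
  shows "\<not> self_orthogonal (length G) (gen_code G)"
proof
  assume self_orth: "self_orthogonal (length G) (gen_code G)"
  define G' where "G' = (\<Sum>i<t. mset_set (V i - {0})) + mset_set (W - {0} - T) + mset_set R"
  have "0 \<notin># G'"
    unfolding not_in_iff using R_def by (auto simp: G'_def count_sum)
  then have complement: "mset G + G' = sS s"
    using G_def G'_le sS_diff_add unfolding G'_def[symmetric] by (metis add.commute)
  have W_dim_ge: "vec.dim W \<ge> 3" using W_dim u_ge by simp
  then have "CARD('k) \<ge> 3"
    using vec.dim_subset_UNIV[of W] by (simp add: vec.dimension_def card_cart_basis)
  have V_dim_ge: "vec.dim (V i) \<ge> 3" if "i < t" for i
    using V_sub decreasing_ge_last[OF us_decr that] us_last u_ge that by fastforce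
  have inner_G: "codeword_inner x y (mset G)
      = (\<Sum>v\<in>T. dotF2 x v * dotF2 y v) + codeword_inner x y (mset_set R)" for x y
    using codeword_inner_complement[OF complement \<open>CARD('k) \<ge> 3\<close>] V_sub V_dim_ge
    by (simp add: G'_def codeword_inner_sum codeword_inner_mset_set
        sum_dotF2_product_subspace_nonzero sum_dotF2_product_subspace_Diff[OF W_sub W_dim_ge T_sub])
  obtain x y where "(\<Sum>v\<in>T. dotF2 x v * dotF2 y v) + codeword_inner x y (mset_set R) = 1"
    using circuit_point_codeword_inner_eq_1[OF _ T_sum _ _ R_def] T_card T_dim u_ge by auto
  then show False
    using inner_G self_orthogonal_codeword_inner[OF self_orth] by simp
qed

end
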